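(* Let $n,k$ be positive integers and $G=G_{n,k}\le\mathrm{Aut}_{\mathrm{gr}}(\Bbbk_{-1}[u,v])$. Then $G$ contains no quasi-reflections if and only if $k\not\equiv2\pmod4$ and $\gcd(n,k)\le2$.
   Context: $\Bbbk$ is algebraically closed of characteristic $0$; $\Bbbk_{-1}[u,v]=\Bbbk\langle u,v\rangle/(vu+uv)$, with matrices $\begin{pmatrix}a&b\\c&d\end{pmatrix}$ acting by $u\mapsto au+cv$, $v\mapsto bu+dv$. With $\omega$ a primitive $(2nk)$th root of unity, $G_{n,k}$ is generated by $\mathrm{diag}(\omega^{2k},\omega^{-2k})$ and $\begin{pmatrix}0&\omega^n\\\omega^n&0\end{pmatrix}$. For a graded automorphism $g$, $\mathrm{Tr}(g)=\sum_i\mathrm{tr}(g|_{A_i})t^i$, and $g$ is a quasi-reflection if $\mathrm{Tr}(g)=\frac1{(1-t)(1-\lambda t)}$ for some $\lambda\ne1$. *)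

theory Defs
  imports "HOL-Computational_Algebra.Polynomial" "HOL-Computational_Algebra.Formal_Power_Series"
begin

datatype 'a m2 = M2 'a 'a 'a 'a  \<comment> \<open>M2 a b c d = [[a,b],[c,d]]\<close>

fun m2_mult :: "'a::comm_ring_1 m2 \<Rightarrow> 'a m2 \<Rightarrow> 'a m2" where
  "m2_mult (M2 a b c d) (M2 a' b' c' d') =
     M2 (a*a' + b*c') (a*b' + b*d') (c*a' + d*c') (c*b' + d*d')"

fun m2_inv :: "'a::field m2 \<Rightarrow> 'a m2" where
  "m2_inv (M2 a b c d) = (let \<Delta> = a*d - b*c in M2 (d/\<Delta>) (-b/\<Delta>) (-c/\<Delta>) (a/\<Delta>))"

definition m2_one :: "'a::comm_ring_1 m2" where "m2_one = M2 1 0 0 1"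

inductive_set gen_group :: "'a::field m2 set \<Rightarrow> 'a m2 set" for S where
  one: "m2_one \<in> gen_group S"
| gen: "g \<in> S \<Longrightarrow> g \<in> gen_group S"
| mult: "g \<in> gen_group S \<Longrightarrow> h \<in> gen_group S \<Longrightarrow> m2_mult g h \<in> gen_group S"
| inv: "g \<in> gen_group S \<Longrightarrow> m2_inv g \<in> gen_group S"

definition G_nk :: "nat \<Rightarrow> nat \<Rightarrow> 'a::field \<Rightarrow> 'a m2 set" where
  "G_nk n k \<omega> = gen_group {M2 (\<omega>^(2*k)) 0 0 (inverse \<omega> ^ (2*k)), M2 0 (\<omega>^n) (\<omega>^n) 0}"

text \<open>Elements are given by coefficients on the normal-form monomials u^a v^b
  (a basis of k_{-1}[u,v]); the product is determined by vu = -uv: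
  (u^a1 v^b1)(u^a2 v^b2) = (-1)^(b1*a2) u^(a1+a2) v^(b1+b2).
  (Functions without finite support are allowed; this is the completion,
  which contains the polynomial ring as a subring.)\<close>

type_synonym 'a skew = "nat \<times> nat \<Rightarrow> 'a"

definition sk_mult :: "'a::comm_ring_1 skew \<Rightarrow> 'a skew \<Rightarrow> 'a skew" where
  "sk_mult p q = (\<lambda>(a,b). \<Sum>a1\<le>a. \<Sum>b1\<le>b.
       p (a1,b1) * q (a - a1, b - b1) * (-1) ^ (b1 * (a - a1)))"

definition sk_mono :: "nat \<Rightarrow> nat \<Rightarrow> 'a::comm_ring_1 skew" where
  "sk_mono a b = (\<lambda>m. if m = (a,b) then 1 else 0)"

fun sk_pow :: "'a::comm_ring_1 skew \<Rightarrow> nat \<Rightarrow> 'a skew" where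
  "sk_pow p 0 = sk_mono 0 0"
| "sk_pow p (Suc m) = sk_mult p (sk_pow p m)"

fun act_u :: "'a::comm_ring_1 m2 \<Rightarrow> 'a skew" where
  "act_u (M2 a b c d) = (\<lambda>m. a * sk_mono 1 0 m + c * sk_mono 0 1 m)"

fun act_v :: "'a::comm_ring_1 m2 \<Rightarrow> 'a skew" where
  "act_v (M2 a b c d) = (\<lambda>m. b * sk_mono 1 0 m + d * sk_mono 0 1 m)"

definition act_mono :: "'a::comm_ring_1 m2 \<Rightarrow> nat \<Rightarrow> nat \<Rightarrow> 'a skew" where
  "act_mono g a b = sk_mult (sk_pow (act_u g) a) (sk_pow (act_v g) b)"

text \<open>tr(g|A_i): A_i has basis u^a v^(i-a), a = 0..i.\<close>
definition tr_deg :: "'a::comm_ring_1 m2 \<Rightarrow> nat \<Rightarrow> 'a" where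
  "tr_deg g i = (\<Sum>a\<le>i. act_mono g a (i - a) (a, i - a))"

definition trace_series :: "'a::comm_ring_1 m2 \<Rightarrow> 'a fps" where
  "trace_series g = Abs_fps (tr_deg g)"

definition quasi_reflection :: "'a::field m2 \<Rightarrow> bool" where
  "quasi_reflection g \<longleftrightarrow> (\<exists>l. l \<noteq> 1 \<and>
      trace_series g = inverse ((1 - fps_X) * (1 - fps_const l * fps_X)))"

definition primitive_root :: "nat \<Rightarrow> 'a::field \<Rightarrow> bool" where
  "primitive_root N w \<longleftrightarrow> w ^ N = 1 \<and> (\<forall>m. 0 < m \<and> m < N \<longrightarrow> w ^ m \<noteq> 1)"

end

theory Submission
  imports Defs
begin

text \<open>
  Every element of \<open>G_{n,k}\<close> is either diagonal or antidiagonal. A diagonal matrix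
  \<open>diag(a, d)\<close> acts on the monomial basis \<open>u^i v^j\<close> diagonally, so its trace series is
  \<open>1/((1 - a t)(1 - d t))\<close>, and it is a quasi-reflection iff exactly one of \<open>a, d\<close> equals 1.
  An antidiagonal matrix with entries \<open>b, c\<close> swaps \<open>u^i v^j\<close> with a multiple of \<open>u^j v^i\<close>,
  so only the monomials \<open>u^j v^j\<close> contribute, with sign \<open>(-1)^j\<close> coming from \<open>vu = -uv\<close>:
  its trace series is \<open>1/(1 + bc t^2)\<close>, a quasi-reflection iff \<open>bc = -1\<close>.
  Writing the entries as powers of \<open>\<omega>\<close>, both conditions become divisibilities modulo \<open>2nk\<close>:
  a diagonal quasi-reflection exists iff \<open>gcd(n,k) > 2\<close>, an antidiagonal one iff
  \<open>k \<equiv> 2 (mod 4)\<close>.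
\<close>

section \<open>Trace series of diagonal and antidiagonal matrices\<close>

definition sk_term :: "'a::comm_ring_1 \<Rightarrow> nat \<Rightarrow> nat \<Rightarrow> 'a skew" where
  "sk_term c a b = (\<lambda>m. if m = (a, b) then c else 0)"

lemma sk_mono_eq_sk_term: "sk_mono a b = sk_term 1 a b"
  by (simp add: sk_mono_def sk_term_def)

lemma sk_mult_sk_term:
  "sk_mult (sk_term c a b) (sk_term c' a' b') = sk_term (c * c' * (-1) ^ (b * a')) (a + a') (b + b')"
proof (intro ext, clarify)
  fix x y
  define v where "v = (if (x - a, y - b) = (a', b') then c * c' * (-1) ^ (b * a') else 0)"
  have summand: "sk_term c a b (a1, b1) * sk_term c' a' b' (x - a1, y - b1) * (-1) ^ (b1 * (x - a1)) =
      (if a1 = a then if b1 = b then v else 0 else 0)" for a1 b1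
    by (auto simp: sk_term_def v_def)
  have "sk_mult (sk_term c a b) (sk_term c' a' b') (x, y) =
      (\<Sum>a1\<le>x. \<Sum>b1\<le>y. if a1 = a then if b1 = b then v else 0 else 0)"
    by (simp only: sk_mult_def prod.case summand)
  also have "\<dots> = (\<Sum>a1\<le>x. if a1 = a then if b \<le> y then v else 0 else 0)"
    by (intro sum.cong refl) (simp add: sum.delta')
  also have "\<dots> = (if a \<le> x \<and> b \<le> y then v else 0)"
    by (simp add: sum.delta')
  finally show "sk_mult (sk_term c a b) (sk_term c' a' b') (x, y) =
      sk_term (c * c' * (-1) ^ (b * a')) (a + a') (b + b') (x, y)"
    by (auto simp: sk_term_def v_def)
qed

lemma sk_pow_sk_term_u: "sk_pow (sk_term c 1 0) m = sk_term (c ^ m) m 0"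
  by (induction m) (simp_all add: sk_mono_eq_sk_term sk_mult_sk_term)

lemma sk_pow_sk_term_v: "sk_pow (sk_term c 0 1) m = sk_term (c ^ m) 0 m"
  by (induction m) (simp_all add: sk_mono_eq_sk_term sk_mult_sk_term)

lemma act_mono_diag: "act_mono (M2 a 0 0 d) p q = sk_term (a ^ p * d ^ q) p q"
proof -
  have u: "act_u (M2 a 0 0 d) = sk_term a 1 0" and v: "act_v (M2 a 0 0 d) = sk_term d 0 1"
    by (auto simp: sk_term_def sk_mono_def)
  show ?thesis
    unfolding act_mono_def u v sk_pow_sk_term_u sk_pow_sk_term_v sk_mult_sk_term by simp
qed

lemma act_mono_antidiag:
  "act_mono (M2 0 b c 0) p q = sk_term (c ^ p * b ^ q * (-1) ^ (p * q)) q p"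
proof -
  have u: "act_u (M2 0 b c 0) = sk_term c 0 1" and v: "act_v (M2 0 b c 0) = sk_term b 1 0"
    by (auto simp: sk_term_def sk_mono_def)
  show ?thesis
    unfolding act_mono_def u v sk_pow_sk_term_u sk_pow_sk_term_v sk_mult_sk_term by simp
qed

lemma tr_deg_diag: "tr_deg (M2 a 0 0 d) i = (\<Sum>j\<le>i. a ^ j * d ^ (i - j))"
  by (simp add: tr_deg_def act_mono_diag sk_term_def)

text \<open>Only the monomial \<open>u^j v^j\<close> of \<open>A_{2j}\<close> is mapped to a multiple of itself.\<close>
lemma tr_deg_antidiag:
  "tr_deg (M2 0 b c 0) i = (if even i then (- (b * c)) ^ (i div 2) else 0)"
proof -
  have diagonal: "i - j = j \<longleftrightarrow> j = i div 2 \<and> even i" if "j \<le> i" for j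
    using that by presburger
  have "act_mono (M2 0 b c 0) j (i - j) (j, i - j) =
      (if j = i div 2 then if even i then (- (b * c)) ^ (i div 2) else 0 else 0)" if "j \<le> i" for j
    using diagonal[OF that] by (auto simp: act_mono_antidiag sk_term_def power_mult_distrib minus_one_power_iff)
  then have "tr_deg (M2 0 b c 0) i =
      (\<Sum>j\<le>i. if j = i div 2 then if even i then (- (b * c)) ^ (i div 2) else 0 else 0)"
    unfolding tr_deg_def by (intro sum.cong) auto
  then show ?thesis
    by simp
qed

lemma geometric_fps_times: "Abs_fps (\<lambda>i. a ^ i) * (1 - fps_const a * fps_X) = (1 :: 'a::comm_ring_1 fps)"
proof -
  have "Abs_fps (\<lambda>i. a ^ i) * (1 - fps_const a * fps_X) =
      Abs_fps (\<lambda>i. a ^ i) - fps_const a * (fps_X * Abs_fps (\<lambda>i. a ^ i))"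
    by (simp add: algebra_simps)
  also have "\<dots> = 1"
  proof (rule fps_ext)
    fix m
    show "fps_nth (Abs_fps (\<lambda>i. a ^ i) - fps_const a * (fps_X * Abs_fps (\<lambda>i. a ^ i))) m =
        fps_nth 1 m"
      by (cases m) simp_all
  qed
  finally show ?thesis .
qed

lemma trace_series_diag_times:
  "trace_series (M2 a 0 0 d) * ((1 - fps_const a * fps_X) * (1 - fps_const d * fps_X)) =
    (1 :: 'a::comm_ring_1 fps)"
proof -
  have "trace_series (M2 a 0 0 d) = Abs_fps (\<lambda>i. a ^ i) * Abs_fps (\<lambda>i. d ^ i)"
    unfolding trace_series_def by (rule fps_ext) (simp add: tr_deg_diag fps_mult_nth atLeast0AtMost)
  then have "trace_series (M2 a 0 0 d) * ((1 - fps_const a * fps_X) * (1 - fps_const d * fps_X)) =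
      (Abs_fps (\<lambda>i. a ^ i) * (1 - fps_const a * fps_X)) *
      (Abs_fps (\<lambda>i. d ^ i) * (1 - fps_const d * fps_X))"
    by (simp only: mult_ac)
  then show ?thesis
    by (simp only: geometric_fps_times mult_1_left)
qed

lemma trace_series_antidiag_times:
  "trace_series (M2 0 b c 0) * (1 + fps_const (b * c) * fps_X\<^sup>2) = (1 :: 'a::comm_ring_1 fps)"
proof -
  let ?T = "trace_series (M2 0 b c 0)"
  have "?T * (1 + fps_const (b * c) * fps_X\<^sup>2) = ?T + fps_const (b * c) * (fps_X\<^sup>2 * ?T)"
    by (simp add: algebra_simps)
  also have "\<dots> = 1"
  proof (rule fps_ext)
    fix m
    show "fps_nth (?T + fps_const (b * c) * (fps_X\<^sup>2 * ?T)) m = fps_nth 1 m"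
    proof (cases m)
      case (Suc m')
      then show ?thesis
        by (cases m') (auto simp: trace_series_def tr_deg_antidiag fps_X_power_mult_nth)
    qed (simp add: trace_series_def tr_deg_antidiag)
  qed
  finally show ?thesis .
qed

lemma fps_linear_factors_expand:
  "(1 - fps_const a * fps_X) * (1 - fps_const d * fps_X) =
    1 - fps_const (a + d) * fps_X + fps_const (a * d) * (fps_X\<^sup>2 :: 'a::comm_ring_1 fps)"
  by (simp add: algebra_simps power2_eq_square flip: fps_const_add fps_const_mult)

lemma fps_quadratic_eq_iff:
  "1 - fps_const p * fps_X + fps_const q * fps_X\<^sup>2 = 1 - fps_const p' * fps_X + fps_const q' * fps_X\<^sup>2
    \<longleftrightarrow> p = p' \<and> q = (q' :: 'a::comm_ring_1)"
proof
  assume h: "1 - fps_const p * fps_X + fps_const q * fps_X\<^sup>2 =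
    1 - fps_const p' * fps_X + fps_const q' * fps_X\<^sup>2"
  show "p = p' \<and> q = q'"
    using arg_cong[OF h, of "\<lambda>f. fps_nth f 1"] arg_cong[OF h, of "\<lambda>f. fps_nth f 2"]
    by (simp add: fps_X_power_nth)
qed simp

lemma quasi_reflection_iff_denominator:
  fixes g :: "'a::field m2"
  assumes "trace_series g * D = 1"
  shows "quasi_reflection g \<longleftrightarrow>
    (\<exists>l. l \<noteq> 1 \<and> D = 1 - fps_const (1 + l) * fps_X + fps_const l * fps_X\<^sup>2)"
  unfolding quasi_reflection_def
proof (intro ex_cong1 conj_cong refl)
  fix l :: 'a
  let ?E = "(1 - fps_X) * (1 - fps_const l * fps_X)"
  have E0: "fps_nth ?E 0 \<noteq> 0" by simp
  have "trace_series g = inverse ?E \<longleftrightarrow> D = ?E"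
  proof
    assume "trace_series g = inverse ?E"
    then have "trace_series g * ?E = 1" using E0 by (simp add: inverse_mult_eq_1)
    then have "D = (trace_series g * D) * ?E" by (simp add: mult_ac)
    then show "D = ?E" using assms by simp
  next
    assume "D = ?E"
    then show "trace_series g = inverse ?E"
      using assms fps_inverse_unique[of ?E "trace_series g"] by (simp add: mult.commute)
  qed
  then show "trace_series g = inverse ?E \<longleftrightarrow>
      D = 1 - fps_const (1 + l) * fps_X + fps_const l * fps_X\<^sup>2"
    using fps_linear_factors_expand[of 1 l] by simp
qed

lemma quasi_reflection_diag_iff:
  "quasi_reflection (M2 a 0 0 (d :: 'a::field)) \<longleftrightarrow> (a = 1 \<longleftrightarrow> d \<noteq> 1)"
proof -
  have "quasi_reflection (M2 a 0 0 d) \<longleftrightarrow> (\<exists>l. l \<noteq> 1 \<and> a + d = 1 + l \<and> a * d = l)"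
    using quasi_reflection_iff_denominator[OF trace_series_diag_times, of a d]
    unfolding fps_linear_factors_expand fps_quadratic_eq_iff .
  also have "\<dots> \<longleftrightarrow> (a = 1 \<longleftrightarrow> d \<noteq> 1)"
  proof
    assume "\<exists>l. l \<noteq> 1 \<and> a + d = 1 + l \<and> a * d = l"
    then obtain l where l: "l \<noteq> 1" "a + d = 1 + l" "a * d = l" by blast
    then have "(a - 1) * (d - 1) = 0" by (simp add: algebra_simps)
    then show "a = 1 \<longleftrightarrow> d \<noteq> 1" using l by auto
  qed auto
  finally show ?thesis .
qed

lemma quasi_reflection_antidiag_iff:
  "quasi_reflection (M2 0 b c (0 :: 'a::field_char_0)) \<longleftrightarrow> b * c = -1"
proof -
  have "1 + fps_const (b * c) * fps_X\<^sup>2 = 1 - fps_const 0 * fps_X + fps_const (b * c) * (fps_X\<^sup>2 :: 'a fps)"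
    by simp
  then have "quasi_reflection (M2 0 b c 0) \<longleftrightarrow> (\<exists>l. l \<noteq> 1 \<and> 0 = 1 + l \<and> b * c = l)"
    using quasi_reflection_iff_denominator[OF trace_series_antidiag_times, of b c]
    by (simp only: fps_quadratic_eq_iff)
  also have "\<dots> \<longleftrightarrow> b * c = -1"
    by (auto simp: eq_neg_iff_add_eq_0 add.commute)
  finally show ?thesis .
qed

section \<open>The elements of \<open>G_{n,k}\<close>\<close>

text \<open>With \<open>D\<close> and \<open>A\<close> the diagonal and antidiagonal generators,
  \<open>G_diag w n k i j = D^i (A^2)^j\<close> and \<open>G_antidiag w n k i j = D^i (A^2)^j A\<close>.\<close>

definition G_diag :: "'a::field \<Rightarrow> nat \<Rightarrow> nat \<Rightarrow> int \<Rightarrow> int \<Rightarrow> 'a m2" where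
  "G_diag w n k i j =
    M2 (w powi (2 * (int k * i + int n * j))) 0 0 (w powi (2 * (int n * j - int k * i)))"

definition G_antidiag :: "'a::field \<Rightarrow> nat \<Rightarrow> nat \<Rightarrow> int \<Rightarrow> int \<Rightarrow> 'a m2" where
  "G_antidiag w n k i j =
    M2 0 (w powi (2 * int k * i + int n * (2 * j + 1))) (w powi (int n * (2 * j + 1) - 2 * int k * i)) 0"

lemma m2_inv_diag:
  "a \<noteq> 0 \<Longrightarrow> d \<noteq> 0 \<Longrightarrow> m2_inv (M2 a 0 0 d) = M2 (inverse a) 0 0 (inverse (d :: 'a::field))"
  by (simp add: Let_def field_simps)

lemma m2_inv_antidiag:
  "b \<noteq> 0 \<Longrightarrow> c \<noteq> 0 \<Longrightarrow> m2_inv (M2 0 b c 0) = M2 0 (inverse c) (inverse b) (0 :: 'a::field)"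
  by (simp add: Let_def field_simps)

context
  fixes w :: "'a::field" and n k :: nat
  assumes w_nonzero: "w \<noteq> 0"
begin

lemma G_diag_zero: "G_diag w n k 0 0 = m2_one"
  by (simp add: m2_one_def G_diag_def)

lemma G_diag_mult_G_diag:
  "m2_mult (G_diag w n k i j) (G_diag w n k i' j') = G_diag w n k (i + i') (j + j')"
  by (simp add: G_diag_def w_nonzero flip: power_int_add) (simp add: algebra_simps)

lemma G_diag_mult_G_antidiag:
  "m2_mult (G_diag w n k i j) (G_antidiag w n k i' j') = G_antidiag w n k (i + i') (j + j')"
  by (simp add: G_diag_def G_antidiag_def w_nonzero flip: power_int_add) (simp add: algebra_simps)

lemma G_antidiag_mult_G_diag:
  "m2_mult (G_antidiag w n k i j) (G_diag w n k i' j') = G_antidiag w n k (i - i') (j + j')"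
  by (simp add: G_diag_def G_antidiag_def w_nonzero flip: power_int_add) (simp add: algebra_simps)

lemma G_antidiag_mult_G_antidiag:
  "m2_mult (G_antidiag w n k i j) (G_antidiag w n k i' j') = G_diag w n k (i - i') (j + j' + 1)"
  by (simp add: G_diag_def G_antidiag_def w_nonzero flip: power_int_add) (simp add: algebra_simps)

lemma m2_inv_G_diag: "m2_inv (G_diag w n k i j) = G_diag w n k (- i) (- j)"
  unfolding G_diag_def
  by (simp del: m2_inv.simps add: m2_inv_diag power_int_not_zero w_nonzero flip: power_int_minus)

lemma m2_inv_G_antidiag: "m2_inv (G_antidiag w n k i j) = G_antidiag w n k i (- j - 1)"
  unfolding G_antidiag_def
  by (simp del: m2_inv.simps add: m2_inv_antidiag power_int_not_zero w_nonzero flip: power_int_minus)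
    (intro conjI arg_cong[where f = "power_int w"]; algebra)

lemma G_nk_eq_gen_group: "G_nk n k w = gen_group {G_diag w n k 1 0, G_antidiag w n k 0 0}"
proof -
  have "M2 (w ^ (2 * k)) 0 0 (inverse w ^ (2 * k)) = G_diag w n k 1 0"
    by (simp add: G_diag_def power_int_minus power_int_inverse flip: power_int_of_nat)
  moreover have "M2 0 (w ^ n) (w ^ n) 0 = G_antidiag w n k 0 0"
    by (simp add: G_antidiag_def flip: power_int_of_nat)
  ultimately show ?thesis
    unfolding G_nk_def by simp
qed

lemma G_diag_in_G_nk: "G_diag w n k i j \<in> G_nk n k w"
proof -
  let ?G = "G_nk n k w"
  have mult: "m2_mult g h \<in> ?G" if "g \<in> ?G" "h \<in> ?G" for g h
    using that unfolding G_nk_def by (rule gen_group.mult)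
  have inv: "m2_inv g \<in> ?G" if "g \<in> ?G" for g
    using that unfolding G_nk_def by (rule gen_group.inv)
  have D: "G_diag w n k 1 0 \<in> ?G" and A: "G_antidiag w n k 0 0 \<in> ?G"
    unfolding G_nk_eq_gen_group by (auto intro: gen_group.gen)
  have D': "G_diag w n k 0 1 \<in> ?G"
    using mult[OF A A] by (simp add: G_antidiag_mult_G_antidiag)
  have "G_diag w n k 0 0 \<in> ?G"
    unfolding G_diag_zero G_nk_def by (rule gen_group.one)
  then have "G_diag w n k i 0 \<in> ?G"
  proof (induction i rule: int_induct[where k = 0])
    case (step1 i)
    then show ?case using mult[OF step1(2) D] by (simp add: G_diag_mult_G_diag)
  next
    case (step2 i)
    then show ?case using mult[OF step2(2) inv[OF D]] by (simp add: G_diag_mult_G_diag m2_inv_G_diag)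
  qed
  then show ?thesis
  proof (induction j rule: int_induct[where k = 0])
    case (step1 j)
    then show ?case using mult[OF step1(2) D'] by (simp add: G_diag_mult_G_diag)
  next
    case (step2 j)
    then show ?case using mult[OF step2(2) inv[OF D']] by (simp add: G_diag_mult_G_diag m2_inv_G_diag)
  qed
qed

lemma G_antidiag_in_G_nk: "G_antidiag w n k i j \<in> G_nk n k w"
proof -
  have "G_antidiag w n k 0 0 \<in> G_nk n k w"
    unfolding G_nk_eq_gen_group by (auto intro: gen_group.gen)
  then have "m2_mult (G_diag w n k i j) (G_antidiag w n k 0 0) \<in> G_nk n k w"
    using G_diag_in_G_nk unfolding G_nk_def by (rule gen_group.mult[rotated])
  then show ?thesis by (simp add: G_diag_mult_G_antidiag)
qed

lemma G_nk_elements: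
  "g \<in> G_nk n k w \<longleftrightarrow> (\<exists>i j. g = G_diag w n k i j \<or> g = G_antidiag w n k i j)"
proof
  assume "g \<in> G_nk n k w"
  then show "\<exists>i j. g = G_diag w n k i j \<or> g = G_antidiag w n k i j"
    unfolding G_nk_eq_gen_group
  proof (induction rule: gen_group.induct)
    case one
    then show ?case by (metis G_diag_zero)
  next
    case (mult g h)
    then show ?case
      by (metis G_diag_mult_G_diag G_diag_mult_G_antidiag G_antidiag_mult_G_diag G_antidiag_mult_G_antidiag)
  next
    case (inv g)
    then show ?case by (metis m2_inv_G_diag m2_inv_G_antidiag)
  qed blast
qed (auto intro: G_diag_in_G_nk G_antidiag_in_G_nk)

end

lemma primitive_root_nonzero: "primitive_root N w \<Longrightarrow> 0 < N \<Longrightarrow> w \<noteq> 0"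
  unfolding primitive_root_def by (metis power_0_left less_not_refl zero_neq_one)

lemma primitive_root_power_int_eq_1_iff:
  fixes w :: "'a::field"
  assumes prim: "primitive_root N w" and "0 < N"
  shows "w powi z = 1 \<longleftrightarrow> int N dvd z"
proof -
  have w: "w \<noteq> 0" using primitive_root_nonzero[OF assms] .
  define r where "r = nat (z mod int N)"
  have r: "z mod int N = int r" "r < N"
    unfolding r_def using \<open>0 < N\<close> by (auto simp: nat_less_iff)
  have "w powi (int N * (z div int N)) = 1"
    using prim by (simp add: power_int_mult primitive_root_def)
  then have "w powi (int N * (z div int N) + z mod int N) = w ^ r"
    using power_int_add[of w "int N * (z div int N)" "z mod int N"] w r by simp
  then have "w powi z = w ^ r" by simp
  also have "\<dots> = 1 \<longleftrightarrow> r = 0"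
    using prim r(2) unfolding primitive_root_def by (metis bot_nat_0.not_eq_extremum power_0)
  also have "\<dots> \<longleftrightarrow> int N dvd z"
    using r by (simp add: dvd_eq_mod_eq_0)
  finally show ?thesis .
qed

lemma primitive_root_power_int_eq_minus_1_iff:
  fixes w :: "'a::field"
  assumes prim: "primitive_root (2 * M) w" and "0 < M"
  shows "w powi z = -1 \<longleftrightarrow> int (2 * M) dvd z + int M"
proof -
  have w: "w \<noteq> 0" using primitive_root_nonzero[OF prim] \<open>0 < M\<close> by simp
  have "w ^ M * w ^ M = 1"
    using prim by (simp add: primitive_root_def flip: power_add mult_2)
  moreover have "w ^ M \<noteq> 1"
    using prim \<open>0 < M\<close> unfolding primitive_root_def by simp
  ultimately have half: "w ^ M = -1"
    by (simp add: square_eq_1_iff)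
  have "w powi (z + int M) = - (w powi z)"
    using power_int_add[of w z "int M"] w half by simp
  then have "w powi z = -1 \<longleftrightarrow> w powi (z + int M) = 1"
    by (metis minus_minus)
  also have "\<dots> \<longleftrightarrow> int (2 * M) dvd z + int M"
    using primitive_root_power_int_eq_1_iff[OF prim] \<open>0 < M\<close> by simp
  finally show ?thesis .
qed

section \<open>Arithmetic of the exponents\<close>

lemma dvd_sum_imp_dvd_double:
  fixes n k i j :: int
  assumes gcd: "gcd n k dvd 2" and dvd: "n * k dvd k * i + n * j"
  shows "n * k dvd 2 * (k * i)"
proof -
  have "n dvd k * i + n * j" using dvd by (rule dvd_mult_left)
  then have "n dvd k * i" by (simp add: dvd_add_left_iff)
  then have "n dvd gcd (i * n) (i * k)" by (simp add: mult.commute)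
  also have "\<dots> = \<bar>i\<bar> * gcd n k" by (simp add: gcd_mult_distrib_int)
  also have "\<dots> dvd \<bar>i\<bar> * 2" using gcd by (rule mult_dvd_mono[OF dvd_refl])
  also have "\<dots> = \<bar>2 * i\<bar>" by (simp add: abs_mult)
  finally have "n dvd 2 * i" by simp
  then show ?thesis by (metis mult.assoc mult.commute mult_dvd_mono dvd_refl)
qed

lemma dvd_sum_iff_dvd_diff:
  fixes n k i j :: int
  assumes "gcd n k dvd 2"
  shows "n * k dvd k * i + n * j \<longleftrightarrow> n * k dvd n * j - k * i"
proof
  assume sum: "n * k dvd k * i + n * j"
  have "n * k dvd (k * i + n * j) - 2 * (k * i)"
    using sum dvd_sum_imp_dvd_double[OF assms sum] by (rule dvd_diff)
  then show "n * k dvd n * j - k * i" by (simp add: algebra_simps)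
next
  assume "n * k dvd n * j - k * i"
  then have diff: "n * k dvd k * (- i) + n * j" by (simp add: algebra_simps)
  have "n * k dvd (k * (- i) + n * j) - 2 * (k * (- i))"
    using diff dvd_sum_imp_dvd_double[OF assms diff] by (rule dvd_diff)
  then show "n * k dvd k * i + n * j" by (simp add: algebra_simps)
qed

lemma ex_dvd_sum_not_dvd_diff_iff:
  fixes n k :: int
  assumes "0 < n" "0 < k"
  shows "(\<exists>i j. \<not> (n * k dvd k * i + n * j \<longleftrightarrow> n * k dvd n * j - k * i)) \<longleftrightarrow> 2 < gcd n k"
proof
  assume "\<exists>i j. \<not> (n * k dvd k * i + n * j \<longleftrightarrow> n * k dvd n * j - k * i)"
  then have not_dvd: "\<not> gcd n k dvd 2" using dvd_sum_iff_dvd_diff by blast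
  show "2 < gcd n k"
  proof (rule ccontr)
    assume "\<not> 2 < gcd n k"
    moreover have "0 < gcd n k" using assms by simp
    ultimately have "gcd n k = 1 \<or> gcd n k = 2" by linarith
    then show False using not_dvd by auto
  qed
next
  define g where "g = gcd n k"
  assume "2 < gcd n k"
  then have "2 < g" by (simp add: g_def)
  obtain a b where n: "n = g * a" and k: "k = g * b"
    unfolding g_def by (meson gcd_dvd1 gcd_dvd2 dvdE)
  have "0 < a" "0 < b" using assms \<open>2 < g\<close> n k by (auto simp: zero_less_mult_iff)
  then have "0 < 2 * (g * a * b)" and "2 * (g * a * b) < n * k"
    using \<open>2 < g\<close> unfolding n k by (simp_all add: algebra_simps)
  then have "\<not> n * k dvd 2 * (g * a * b)" by (auto dest: zdvd_imp_le)
  then have "\<not> n * k dvd n * (- b) - k * a"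
    unfolding n k by (simp add: algebra_simps)
  moreover have "k * a + n * (- b) = 0" unfolding n k by simp
  ultimately show "\<exists>i j. \<not> (n * k dvd k * i + n * j \<longleftrightarrow> n * k dvd n * j - k * i)"
    by (metis dvd_0_right)
qed

lemma ex_dvd_four_add_two_iff:
  fixes k :: int
  shows "(\<exists>j. 2 * k dvd 4 * j + 2 + k) \<longleftrightarrow> k mod 4 = 2"
proof
  assume "\<exists>j. 2 * k dvd 4 * j + 2 + k"
  then obtain j where dvd: "2 * k dvd 4 * j + 2 + k" ..
  then have "2 dvd 4 * j + 2 + k" by (rule dvd_mult_left)
  then have "even k" by presburger
  then obtain m where k: "k = 2 * m" by (rule evenE)
  have "2 * (2 * m) dvd 2 * (2 * j + 1 + m)" using dvd unfolding k by (simp add: algebra_simps)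
  then have "2 * m dvd 2 * j + 1 + m" by (simp only: dvd_mult_cancel_left) simp
  then have "2 dvd 2 * j + 1 + m" by (rule dvd_trans[OF dvd_triv_left])
  then have "odd m" by presburger
  then show "k mod 4 = 2" unfolding k by presburger
next
  assume "k mod 4 = 2"
  then have "4 * (k div 4) + 2 + k = 2 * k" by presburger
  then show "\<exists>j. 2 * k dvd 4 * j + 2 + k" by (metis dvd_refl)
qed

lemma quasi_reflection_G_diag_iff:
  fixes w :: "'a::field"
  assumes prim: "primitive_root (2 * n * k) w" and "0 < n" "0 < k"
  shows "quasi_reflection (G_diag w n k i j) \<longleftrightarrow>
    \<not> (int n * int k dvd int k * i + int n * j \<longleftrightarrow> int n * int k dvd int n * j - int k * i)"
proof -
  have "w powi (2 * x) = 1 \<longleftrightarrow> int n * int k dvd x" for x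
    using primitive_root_power_int_eq_1_iff[OF prim, of "2 * x"] assms by (simp add: mult.assoc)
  then show ?thesis
    unfolding G_diag_def quasi_reflection_diag_iff by blast
qed

lemma quasi_reflection_G_antidiag_iff:
  fixes w :: "'a::field_char_0"
  assumes prim: "primitive_root (2 * n * k) w" and "0 < n" "0 < k"
  shows "quasi_reflection (G_antidiag w n k i j) \<longleftrightarrow> 2 * int k dvd 4 * j + 2 + int k"
proof -
  have w: "w \<noteq> 0" using primitive_root_nonzero[OF prim] assms by simp
  have "quasi_reflection (G_antidiag w n k i j) \<longleftrightarrow> w powi (int n * (4 * j + 2)) = -1"
    unfolding G_antidiag_def quasi_reflection_antidiag_iff
    using power_int_add[of w "2 * int k * i + int n * (2 * j + 1)" "int n * (2 * j + 1) - 2 * int k * i"] w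
    by (simp add: algebra_simps)
  also have "\<dots> \<longleftrightarrow> int n * (2 * int k) dvd int n * (4 * j + 2 + int k)"
    using primitive_root_power_int_eq_minus_1_iff[of "n * k" w "int n * (4 * j + 2)"] prim assms
    by (simp add: algebra_simps)
  also have "\<dots> \<longleftrightarrow> 2 * int k dvd 4 * j + 2 + int k"
    using \<open>0 < n\<close> by simp
  finally show ?thesis .
qed

lemma ex_quasi_reflection_in_G_nk_iff:
  fixes w :: "'a::field_char_0"
  assumes prim: "primitive_root (2 * n * k) w" and "0 < n" "0 < k"
  shows "(\<exists>g \<in> G_nk n k w. quasi_reflection g) \<longleftrightarrow> k mod 4 = 2 \<or> 2 < gcd n k"
proof -
  have w: "w \<noteq> 0" using primitive_root_nonzero[OF prim] assms by simp
  have "(\<exists>g \<in> G_nk n k w. quasi_reflection g) \<longleftrightarrow>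
      (\<exists>i j. quasi_reflection (G_diag w n k i j)) \<or> (\<exists>i j. quasi_reflection (G_antidiag w n k i j))"
    unfolding Bex_def G_nk_elements[OF w] by blast
  also have "\<dots> \<longleftrightarrow> 2 < gcd (int n) (int k) \<or> int k mod 4 = 2"
    using ex_dvd_sum_not_dvd_diff_iff[of "int n" "int k"] assms
    unfolding quasi_reflection_G_diag_iff[OF assms] quasi_reflection_G_antidiag_iff[OF assms]
      ex_dvd_four_add_two_iff by simp
  also have "\<dots> \<longleftrightarrow> k mod 4 = 2 \<or> 2 < gcd n k"
    by (simp add: gcd_int_int_eq flip: of_nat_mod) presburger
  finally show ?thesis .
qed

theorem mainTheorem5:
  fixes n k :: nat and \<omega> :: "'a :: {alg_closed_field, field_char_0}"
  assumes "0 < n" and "0 < k"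
    and "primitive_root (2 * n * k) \<omega>"
  shows "(\<forall>g \<in> G_nk n k \<omega>. \<not> quasi_reflection g) \<longleftrightarrow> (k mod 4 \<noteq> 2 \<and> gcd n k \<le> 2)"
  using ex_quasi_reflection_in_G_nk_iff[OF assms(3,1,2)] by auto

end
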